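(* Let $p_1\equiv p_2\equiv1\pmod4$ be primes, $d=2p_1p_2$, and let $\varepsilon_d=x+y\sqrt d$ be the fundamental unit of $\mathbb{Q}(\sqrt d)$. If $N(\varepsilon_d)=-1$, then there exist $y_1,y_2\in\mathbb{Z}[i]$ such that, for a suitable choice of sign $\pm$ (with $\mp$ the opposite sign) and of the square roots, $\sqrt{\varepsilon_d}$ equals one of (1) $\tfrac12\big[y_1(1+i)\sqrt{(1\pm i)\pi_1\pi_3}+y_2(1-i)\sqrt{(1\mp i)\pi_2\pi_4}\big]$, or (2) $\tfrac12\big[y_1(1+i)\sqrt{(1\pm i)\pi_1\pi_4}+y_2(1-i)\sqrt{(1\mp i)\pi_2\pi_3}\big]$.
   Context: $i=\sqrt{-1}$. Write $p_1=e^2+4f^2$, $p_2=g^2+4h^2$ with integers $e,f,g,h$, and set $\pi_1=e+2if$, $\pi_2=e-2if$, $\pi_3=g+2ih$, $\pi_4=g-2ih$ in $\mathbb{Z}[i]$, so that $p_1=\pi_1\pi_2$ and $p_2=\pi_3\pi_4$. $N$ denotes the norm from $\mathbb{Q}(\sqrt d)$ to $\mathbb{Q}$. *)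

theory Defs
  imports Complex_Main "HOL-Computational_Algebra.Primes"
begin

text \<open>Units of the ring of integers Z[sqrt d] of Q(sqrt d), for squarefree d = 2 mod 4,
  viewed as real numbers a + b sqrt d with a, b integers and norm a^2 - d b^2 = +-1.\<close>
definition is_unit_Zsqrt :: "int \<Rightarrow> real \<Rightarrow> bool" where
  "is_unit_Zsqrt d u \<longleftrightarrow>
     (\<exists>a b :: int. u = real_of_int a + real_of_int b * sqrt (real_of_int d) \<and>
                   (a^2 - d * b^2 = 1 \<or> a^2 - d * b^2 = -1))"

definition fundamental_unit :: "int \<Rightarrow> real \<Rightarrow> bool" where
  "fundamental_unit d \<epsilon> \<longleftrightarrow>
     is_unit_Zsqrt d \<epsilon> \<and> \<epsilon> > 1 \<and> (\<forall>u. is_unit_Zsqrt d u \<and> u > 1 \<longrightarrow> \<epsilon> \<le> u)"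

definition gauss_int :: "complex \<Rightarrow> bool" where
  "gauss_int z \<longleftrightarrow> Re z \<in> \<int> \<and> Im z \<in> \<int>"

end

theory Submission
  imports Defs
begin

text \<open>
  From \<open>x\<^sup>2 + 1 = d y\<^sup>2\<close> with \<open>y\<close> odd, a gcd \<open>G\<close> of \<open>x + \<i>\<close> and \<open>y\<close> in \<open>\<int>[\<i>]\<close>
  is coprime to \<open>x - \<i>\<close>, which forces \<open>x + \<i> = G\<^sup>2 c\<close> with \<open>N G = |y|\<close> and \<open>N c = d\<close>.
  Then \<open>c\<close> is \<open>1 + \<i>\<close> times one of \<open>\<pi>\<^sub>1, \<pi>\<^sub>2\<close>, one of \<open>\<pi>\<^sub>3, \<pi>\<^sub>4\<close> and a unit; after conjugating
  if necessary and absorbing the unit into \<open>G\<close> one gets \<open>w\<^sup>2 A = -\<i> (x \<pm> \<i>)\<close> with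
  \<open>A = (1 \<pm> \<i>) \<pi>\<^sub>1 \<pi>\<^sub>3\<close> or \<open>(1 \<pm> \<i>) \<pi>\<^sub>1 \<pi>\<^sub>4\<close> and \<open>N w = |y|\<close>. Choosing \<open>r\<^sub>1\<^sup>2 = A\<close> and
  \<open>r\<^sub>1 r\<^sub>2 = sgn y \<surd>d\<close>, so that \<open>r\<^sub>2\<^sup>2 = conj A\<close>, the number \<open>(w (1 + \<i>) r\<^sub>1 + conj w (1 - \<i>) r\<^sub>2) / 2\<close>
  squares to \<open>- Im (w\<^sup>2 A) + N w \<cdot> sgn y \<surd>d = x + y \<surd>d = \<epsilon>\<^sub>d\<close>, so up to the sign of \<open>w\<close> it is \<open>\<surd>\<epsilon>\<^sub>d\<close>.
\<close>

lemma gauss_int_add [simp, intro]: "gauss_int a \<Longrightarrow> gauss_int b \<Longrightarrow> gauss_int (a + b)"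
  and gauss_int_diff [simp, intro]: "gauss_int a \<Longrightarrow> gauss_int b \<Longrightarrow> gauss_int (a - b)"
  and gauss_int_minus [simp, intro]: "gauss_int a \<Longrightarrow> gauss_int (- a)"
  and gauss_int_mult [simp, intro]: "gauss_int a \<Longrightarrow> gauss_int b \<Longrightarrow> gauss_int (a * b)"
  and gauss_int_cnj [simp, intro]: "gauss_int a \<Longrightarrow> gauss_int (cnj a)"
  and gauss_int_of_int [simp, intro]: "gauss_int (of_int n)"
  and gauss_int_ii [simp, intro]: "gauss_int \<i>"
  and gauss_int_1 [simp, intro]: "gauss_int 1"
  and gauss_int_Complex [simp, intro]: "gauss_int (Complex (of_int n) (of_int m))"
  by (auto simp: gauss_int_def)

lemma gauss_int_power [simp, intro]: "gauss_int a \<Longrightarrow> gauss_int (a ^ n)"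
  by (induction n) auto

lemma gauss_intE:
  assumes "gauss_int z"
  obtains a b :: int where "z = Complex (of_int a) (of_int b)"
  using assms unfolding gauss_int_def by (metis Ints_cases complex_surj)

lemma gauss_int_norm:
  assumes "gauss_int z"
  obtains n :: int where "z * cnj z = of_int n" "(cmod z)^2 = of_int n" "n \<ge> 0"
proof -
  obtain a b where "z = Complex (of_int a) (of_int b)" using assms by (rule gauss_intE)
  then show ?thesis
    by (intro that[of "a^2 + b^2"]) (auto simp: cmod_def complex_eq_iff power2_eq_square)
qed

lemma sum_squares_eq_of_mult_cnj:
  fixes z :: complex and a b n :: int
  assumes "z = Complex (of_int a) (of_int b)" "z * cnj z = of_int n"
  shows "a^2 + b^2 = n"
proof -
  have "of_int (a^2 + b^2) = (of_int n :: complex)"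
    using assms by (simp add: complex_eq_iff power2_eq_square)
  then show ?thesis by (simp only: of_int_eq_iff)
qed

definition gauss_dvd :: "complex \<Rightarrow> complex \<Rightarrow> bool" where
  "gauss_dvd a b \<longleftrightarrow> (\<exists>k. gauss_int k \<and> b = a * k)"

definition gauss_coprime :: "complex \<Rightarrow> complex \<Rightarrow> bool" where
  "gauss_coprime a b \<longleftrightarrow>
     (\<forall>\<delta>. gauss_int \<delta> \<longrightarrow> gauss_dvd \<delta> a \<longrightarrow> gauss_dvd \<delta> b \<longrightarrow> gauss_dvd \<delta> 1)"

lemma gauss_dvd_refl [simp]: "gauss_dvd a a"
  unfolding gauss_dvd_def by (rule exI[of _ 1]) (simp add: gauss_int_def)

lemma gauss_dvd_trans: "gauss_dvd a b \<Longrightarrow> gauss_dvd b c \<Longrightarrow> gauss_dvd a c"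
  unfolding gauss_dvd_def by (metis gauss_int_mult mult.assoc)

lemma gauss_dvd_add: "gauss_dvd a b \<Longrightarrow> gauss_dvd a c \<Longrightarrow> gauss_dvd a (b + c)"
  unfolding gauss_dvd_def by (metis gauss_int_add distrib_left)

lemma gauss_dvd_diff: "gauss_dvd a b \<Longrightarrow> gauss_dvd a c \<Longrightarrow> gauss_dvd a (b - c)"
  unfolding gauss_dvd_def by (metis gauss_int_diff right_diff_distrib)

lemma gauss_dvd_mult_left: "gauss_dvd a b \<Longrightarrow> gauss_int c \<Longrightarrow> gauss_dvd a (c * b)"
  unfolding gauss_dvd_def by (metis gauss_int_mult mult.left_commute)

lemma gauss_dvd_triv_left [simp]: "gauss_int c \<Longrightarrow> gauss_dvd a (a * c)"
  unfolding gauss_dvd_def by auto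

lemma gauss_dvd_cnj: "gauss_dvd a b \<Longrightarrow> gauss_dvd (cnj a) (cnj b)"
  unfolding gauss_dvd_def by (metis gauss_int_cnj complex_cnj_mult)

lemma gauss_dvd_of_int_iff: "gauss_dvd (of_int a) (of_int b) \<longleftrightarrow> a dvd b"
proof
  assume "gauss_dvd (of_int a) (of_int b)"
  then obtain k where k: "gauss_int k" "of_int b = of_int a * k" unfolding gauss_dvd_def by blast
  obtain u v where "k = Complex (of_int u) (of_int v)" using k(1) by (rule gauss_intE)
  with k(2) have "b = a * u" by (simp add: complex_eq_iff flip: of_int_mult)
  then show "a dvd b" ..
next
  assume "a dvd b"
  then obtain c where "b = a * c" ..
  then show "gauss_dvd (of_int a) (of_int b)"
    unfolding gauss_dvd_def by (intro exI[of _ "of_int c"]) simp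
qed

lemma gauss_int_division:
  assumes "gauss_int p" "gauss_int q" "q \<noteq> 0"
  obtains k where "gauss_int k" "cmod (p - k * q) < cmod q"
proof -
  define u where "u = p / q"
  define k where "k = Complex (of_int (round (Re u))) (of_int (round (Im u)))"
  have "\<bar>Re (u - k)\<bar> \<le> \<bar>1/2\<bar>" "\<bar>Im (u - k)\<bar> \<le> \<bar>1/2\<bar>"
    using of_int_round_abs_le[of "Re u"] of_int_round_abs_le[of "Im u"]
    by (simp_all add: k_def abs_minus_commute)
  then have "(Re (u - k))^2 + (Im (u - k))^2 \<le> 1/4 + 1/4"
    unfolding abs_le_square_iff by (intro add_mono) (simp_all add: power2_eq_square)
  then have "cmod (u - k) < 1"
    by (simp add: cmod_def)
  moreover have "p - k * q = q * (u - k)"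
    using assms(3) by (simp add: u_def field_simps)
  ultimately have "cmod (p - k * q) < cmod q"
    using assms(3) by (simp add: norm_mult)
  then show ?thesis by (intro that) (simp_all add: k_def)
qed

lemma gauss_bezout:
  assumes "gauss_int p" "gauss_int q"
  obtains g s t where "gauss_int g" "gauss_int s" "gauss_int t"
    "gauss_dvd g p" "gauss_dvd g q" "g = s * p + t * q"
  using assms
proof (induction "nat \<lfloor>(cmod q)^2\<rfloor>" arbitrary: p q thesis rule: less_induct)
  case less
  show ?case
  proof (cases "q = 0")
    case True
    then show ?thesis
      using less.prems by (intro less.prems(1)[of p 1 0]) (auto simp: gauss_dvd_def)
  next
    case False
    obtain k where k: "gauss_int k" "cmod (p - k * q) < cmod q"
      using less.prems(2,3) False by (rule gauss_int_division)
    define r where "r = p - k * q"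
    have r: "gauss_int r" using k less.prems by (simp add: r_def)
    obtain nr where nr: "(cmod r)^2 = of_int nr" "nr \<ge> 0" using r by (rule gauss_int_norm)
    obtain nq where nq: "(cmod q)^2 = of_int nq" using less.prems(3) by (rule gauss_int_norm)
    have "(cmod r)^2 < (cmod q)^2"
      using k(2) by (simp add: r_def power_strict_mono)
    then have "nat \<lfloor>(cmod r)^2\<rfloor> < nat \<lfloor>(cmod q)^2\<rfloor>"
      using nr nq by simp
    then obtain g s t where g: "gauss_int g" "gauss_int s" "gauss_int t"
      "gauss_dvd g q" "gauss_dvd g r" "g = s * q + t * r"
      using less.hyps less.prems(3) r by metis
    have "gauss_dvd g p"
      using g(4,5) k(1) unfolding r_def
      by (metis gauss_dvd_add gauss_dvd_mult_left diff_add_cancel)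
    moreover have "g = t * p + (s - t * k) * q"
      using g(6) by (simp add: r_def algebra_simps)
    ultimately show ?thesis
      using g k less.prems(1) by simp
  qed
qed

lemma gauss_coprime_bezout:
  assumes "gauss_int a" "gauss_int b" "gauss_coprime a b"
  obtains s t where "gauss_int s" "gauss_int t" "s * a + t * b = 1"
proof -
  obtain g s t where g: "gauss_int g" "gauss_int s" "gauss_int t"
    "gauss_dvd g a" "gauss_dvd g b" "g = s * a + t * b"
    using assms(1,2) by (rule gauss_bezout)
  then obtain k where "gauss_int k" "1 = g * k"
    using assms(3) unfolding gauss_coprime_def gauss_dvd_def by blast
  with g show ?thesis
    by (intro that[of "s * k" "t * k"]) (simp_all add: algebra_simps)
qed

lemma gauss_coprime_dvd_mult:
  assumes "gauss_int a" "gauss_int b" "gauss_int c"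
    and "gauss_coprime a b" "gauss_dvd a (b * c)"
  shows "gauss_dvd a c"
proof -
  obtain s t where st: "gauss_int s" "gauss_int t" "s * a + t * b = 1"
    using assms(1,2,4) by (rule gauss_coprime_bezout)
  have "c = (s * c) * a + t * (b * c)"
    using st(3) by (metis mult.commute mult.left_commute distrib_right mult_1)
  also have "gauss_dvd a \<dots>"
    using st assms(3,5)
    by (intro gauss_dvd_add gauss_dvd_mult_left[OF gauss_dvd_refl]) (auto intro: gauss_dvd_mult_left)
  finally show ?thesis .
qed

lemma prime_dvd_sum_two_squares_cases:
  fixes p a b c d :: int
  assumes "prime p" "p = a^2 + b^2" "p dvd c^2 + d^2"
  shows "(p dvd c * a + d * b \<and> p dvd d * a - c * b) \<or> (p dvd c * a - d * b \<and> p dvd c * b + d * a)"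
proof -
  have sq: "u^2 + v^2 = (c^2 + d^2) * (a^2 + b^2) \<Longrightarrow> p dvd u \<Longrightarrow> p dvd v" for u v :: int
    using assms by (metis dvd_mult2 add_diff_cancel_left' dvd_diff dvd_power
        prime_dvd_power_iff prime_gt_0_int zero_less_numeral)
  have "(c * a + d * b) * (c * a - d * b) = a^2 * (c^2 + d^2) - d^2 * (a^2 + b^2)"
    by (simp add: algebra_simps power2_eq_square)
  then have "p dvd (c * a + d * b) * (c * a - d * b)"
    using assms(2,3) by simp
  then have "p dvd c * a + d * b \<or> p dvd c * a - d * b"
    using assms(1) prime_dvd_mult_iff by blast
  moreover have "(c * a + d * b)^2 + (d * a - c * b)^2 = (c^2 + d^2) * (a^2 + b^2)"
    and "(c * a - d * b)^2 + (c * b + d * a)^2 = (c^2 + d^2) * (a^2 + b^2)"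
    by (simp_all add: algebra_simps power2_eq_square)
  ultimately show ?thesis
    using sq by blast
qed

lemma gauss_prime_factor:
  fixes p a b m :: int
  assumes "prime p" "p = a^2 + b^2" "gauss_int v" "v * cnj v = of_int (p * m)"
  obtains \<pi> w where "\<pi> = of_int a + \<i> * of_int b \<or> \<pi> = of_int a - \<i> * of_int b"
    "gauss_int w" "v = \<pi> * w" "w * cnj w = of_int m"
proof -
  have "p \<noteq> 0" using assms(1) by auto
  have factor: "v = \<pi> * w \<and> w * cnj w = of_int m"
    if \<pi>: "\<pi> = of_int a + \<i> * of_int b \<or> \<pi> = of_int a - \<i> * of_int b"
      and v\<pi>: "v * cnj \<pi> = of_int p * w" for \<pi> w
  proof -
    have \<pi>\<pi>: "\<pi> * cnj \<pi> = of_int p"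
      using \<pi> assms(2) by (auto simp: complex_eq_iff power2_eq_square)
    with \<open>p \<noteq> 0\<close> have "cnj \<pi> \<noteq> 0" by auto
    moreover have "v * cnj \<pi> = (\<pi> * w) * cnj \<pi>" using v\<pi> \<pi>\<pi> by (simp add: mult_ac)
    ultimately have v_eq: "v = \<pi> * w" by simp
    have "of_int p * (w * cnj w) = (\<pi> * cnj \<pi>) * (w * cnj w)" using \<pi>\<pi> by simp
    also have "\<dots> = of_int p * of_int m" using assms(4) v_eq by (simp add: mult_ac)
    finally show ?thesis using v_eq \<open>p \<noteq> 0\<close> by simp
  qed
  obtain c d where v: "v = Complex (of_int c) (of_int d)" using assms(3) by (rule gauss_intE)
  have "c^2 + d^2 = p * m" using v assms(4) by (rule sum_squares_eq_of_mult_cnj)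
  then have "p dvd c^2 + d^2" by simp
  from prime_dvd_sum_two_squares_cases[OF assms(1,2) this] show ?thesis
  proof (elim disjE conjE dvdE)
    fix X Y assume XY: "c * a + d * b = p * X" "d * a - c * b = p * Y"
    define \<pi> where "\<pi> = of_int a + \<i> * of_int b"
    define w where "w = Complex (of_int X) (of_int Y)"
    from XY[THEN arg_cong[of _ _ real_of_int]] have "v = \<pi> * w \<and> w * cnj w = of_int m"
      by (intro factor) (simp_all add: \<pi>_def w_def v complex_eq_iff algebra_simps)
    then show ?thesis by (intro that[of \<pi> w]) (simp_all add: \<pi>_def w_def)
  next
    fix X Y assume XY: "c * a - d * b = p * X" "c * b + d * a = p * Y"
    define \<pi> where "\<pi> = of_int a - \<i> * of_int b"
    define w where "w = Complex (of_int X) (of_int Y)"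
    from XY[THEN arg_cong[of _ _ real_of_int]] have "v = \<pi> * w \<and> w * cnj w = of_int m"
      by (intro factor) (simp_all add: \<pi>_def w_def v complex_eq_iff algebra_simps)
    then show ?thesis by (intro that[of \<pi> w]) (simp_all add: \<pi>_def w_def)
  qed
qed

lemma gauss_unit_cases:
  assumes "gauss_int u" "u * cnj u = 1"
  shows "u = 1 \<or> u = -1 \<or> u = \<i> \<or> u = -\<i>"
proof -
  obtain a b where u: "u = Complex (of_int a) (of_int b)" using assms(1) by (rule gauss_intE)
  have ab: "a^2 + b^2 = 1" using u assms(2) sum_squares_eq_of_mult_cnj[of u a b 1] by simp
  then have "a^2 \<le> 1" "b^2 \<le> 1"
    using zero_le_power2[of a] zero_le_power2[of b] by linarith+
  then have "\<bar>a\<bar> \<le> 1" "\<bar>b\<bar> \<le> 1"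
    using abs_le_square_iff[of a 1] abs_le_square_iff[of b 1] by simp_all
  then have "a \<in> {-1, 0, 1}" "b \<in> {-1, 0, 1}" by auto
  with ab show ?thesis by (auto simp: u complex_eq_iff)
qed

lemma gauss_factor_one_plus_ii:
  assumes "gauss_int c" "c * cnj c = of_int (2 * m)"
  obtains c' where "gauss_int c'" "c = (1 + \<i>) * c'" "c' * cnj c' = of_int m"
proof -
  obtain a b where c: "c = Complex (of_int a) (of_int b)" using assms(1) by (rule gauss_intE)
  have "a^2 + b^2 = 2 * m" using c assms(2) by (rule sum_squares_eq_of_mult_cnj)
  then have "even (a + b)" by (metis dvd_triv_left even_add even_power pos2)
  then obtain X where X: "a + b = 2 * X" ..
  define c' where "c' = Complex (of_int X) (of_int (X - a))"
  have "gauss_int c'" by (simp only: c'_def gauss_int_Complex)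
  have c_eq: "c = (1 + \<i>) * c'" using X by (simp add: c c'_def complex_eq_iff)
  have "(1 + \<i>) * cnj (1 + \<i>) = 2" by (simp add: complex_eq_iff)
  then have "2 * (c' * cnj c') = 2 * of_int m"
    using assms(2) c_eq by (simp add: mult_ac)
  then show ?thesis using c_eq \<open>gauss_int c'\<close> by (intro that[of c']) simp_all
qed

lemma gauss_square_dvd_of_norm_eq:
  fixes y D :: int
  assumes "gauss_int g" "gauss_int z" "g \<noteq> 0"
    and "gauss_dvd g z" "gauss_dvd g (of_int y)" "gauss_coprime g (cnj z)"
    and "z * cnj z = of_int D * (of_int y)^2"
  obtains c where "gauss_int c" "z = g^2 * c"
proof -
  obtain z1 where z1: "gauss_int z1" "z = g * z1" using assms(4) unfolding gauss_dvd_def by blast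
  obtain y1 where y1: "gauss_int y1" "of_int y = g * y1" using assms(5) unfolding gauss_dvd_def by blast
  have "g * (cnj z * z1) = z * cnj z"
    using z1(2) by (simp add: mult_ac)
  also have "\<dots> = g * (g * (of_int D * y1^2))"
    unfolding assms(7) y1(2) by (simp add: power2_eq_square mult_ac)
  finally have "cnj z * z1 = g * (of_int D * y1^2)" using assms(3) by simp
  then have "gauss_dvd g (cnj z * z1)" using y1(1) by simp
  then have "gauss_dvd g z1"
    using gauss_coprime_dvd_mult[OF assms(1) gauss_int_cnj[OF assms(2)] z1(1) assms(6)] by blast
  then obtain c where "gauss_int c" "z1 = g * c" unfolding gauss_dvd_def by blast
  with z1(2) show ?thesis by (intro that[of c]) (simp_all add: power2_eq_square)
qed

lemma gauss_norm_eq_of_bezout: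
  fixes y D :: int
  assumes "gauss_int g" "gauss_int s" "gauss_int t" "gauss_int z"
    and "g = s * z + t * of_int y" "z * cnj z = of_int D * (of_int y)^2"
    and "gauss_dvd g (of_int y)" "gauss_coprime (cnj g) g"
  shows "g * cnj g = of_int \<bar>y\<bar>"
proof -
  obtain n where n: "g * cnj g = of_int n" "n \<ge> 0" using assms(1) by (rule gauss_int_norm)
  define k where "k = s * cnj s * of_int D * of_int y + s * z * cnj t + t * cnj s * cnj z + t * cnj t * of_int y"
  have "g * cnj g = s * cnj s * (z * cnj z) + of_int y * (s * z * cnj t + t * cnj s * cnj z + t * cnj t * of_int y)"
    using assms(5) by (simp add: algebra_simps)
  also have "\<dots> = of_int y * k"
    unfolding assms(6) k_def by (simp add: power2_eq_square algebra_simps)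
  finally have "gauss_dvd (of_int y) (of_int n)"
    using n(1) assms(2-4) unfolding gauss_dvd_def k_def by (metis gauss_int_add gauss_int_mult gauss_int_cnj gauss_int_of_int)
  then have "y dvd n" by (simp add: gauss_dvd_of_int_iff)
  obtain y1 where y1: "gauss_int y1" "of_int y = g * y1" using assms(7) unfolding gauss_dvd_def by blast
  have "gauss_dvd (cnj g) (of_int y)"
    using gauss_dvd_cnj[OF assms(7)] by simp
  then have "gauss_dvd (cnj g) (g * y1)"
    using y1(2) by simp
  then have "gauss_dvd (cnj g) y1"
    using gauss_coprime_dvd_mult[OF gauss_int_cnj[OF assms(1)] assms(1) y1(1) assms(8)] by blast
  then obtain y2 where "gauss_int y2" "y1 = cnj g * y2" unfolding gauss_dvd_def by blast
  with y1(2) n(1) have "gauss_dvd (of_int n) (of_int y)"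
    unfolding gauss_dvd_def by (metis mult.assoc)
  then have "n dvd y" by (simp add: gauss_dvd_of_int_iff)
  with \<open>y dvd n\<close> n show ?thesis
    by (metis zdvd_antisym_abs abs_of_nonneg)
qed

lemma x_plus_ii_eq_square_mult:
  fixes x y D :: int
  assumes eq: "x^2 + 1 = D * y^2" and "odd y"
  obtains G c where "gauss_int G" "gauss_int c" "of_int x + \<i> = G^2 * c"
    "G * cnj G = of_int \<bar>y\<bar>" "c * cnj c = of_int D"
proof -
  define z where "z = of_int x + \<i>"
  have gz: "gauss_int z" by (simp add: z_def)
  have zz: "z * cnj z = of_int D * (of_int y)^2"
    unfolding z_def using arg_cong[OF eq, of complex_of_int]
    by (simp add: complex_eq_iff power2_eq_square)
  obtain k where k: "y = 2 * k + 1" using \<open>odd y\<close> by (rule oddE)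
  \<comment> \<open>The identity \<open>1 = y + \<i> k (z - cnj z)\<close> makes z, cnj z and y jointly coprime.\<close>
  have unit: "gauss_dvd \<delta> 1"
    if "gauss_int \<delta>" "gauss_dvd \<delta> z" "gauss_dvd \<delta> (cnj z)" "gauss_dvd \<delta> (of_int y)" for \<delta>
  proof -
    have "1 = of_int y + (\<i> * of_int k) * (z - cnj z)" by (simp add: z_def k complex_eq_iff)
    also have "gauss_dvd \<delta> \<dots>"
      using that by (intro gauss_dvd_add gauss_dvd_mult_left gauss_dvd_diff) auto
    finally show ?thesis .
  qed
  obtain g s t where g: "gauss_int g" "gauss_int s" "gauss_int t"
    "gauss_dvd g z" "gauss_dvd g (of_int y)" "g = s * z + t * of_int y"
    using gz gauss_int_of_int by (rule gauss_bezout)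
  have "g \<noteq> 0" using g(5) \<open>odd y\<close> by (auto simp: gauss_dvd_def)
  have "gauss_coprime g (cnj z)"
    unfolding gauss_coprime_def
    using unit gauss_dvd_trans[of _ g z] gauss_dvd_trans[of _ g "of_int y"] g(4,5) by blast
  then obtain c where c: "gauss_int c" "z = g^2 * c"
    using gauss_square_dvd_of_norm_eq[OF g(1) gz \<open>g \<noteq> 0\<close> g(4,5) _ zz] by blast
  have "gauss_coprime (cnj g) g"
    unfolding gauss_coprime_def
    using unit gauss_dvd_trans[of _ g z] gauss_dvd_trans[of _ g "of_int y"]
      gauss_dvd_trans[of _ "cnj g" "cnj z"] gauss_dvd_cnj[OF g(4)] g(4,5) by blast
  then have gg: "g * cnj g = of_int \<bar>y\<bar>"
    using gauss_norm_eq_of_bezout[OF g(1-3) gz g(6) zz g(5)] by blast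
  have "(of_int y)^2 * (c * cnj c) = (g * cnj g)^2 * (c * cnj c)"
    unfolding gg by (simp flip: of_int_power)
  also have "\<dots> = z * cnj z"
    unfolding c(2) by (simp add: power2_eq_square mult_ac)
  finally have "(of_int y)^2 * (c * cnj c) = (of_int y)^2 * of_int D"
    unfolding zz by (simp add: mult.commute)
  then have "c * cnj c = of_int D" using \<open>odd y\<close> by auto
  with g(1) c gg show ?thesis by (intro that) (simp_all add: z_def)
qed

lemma gauss_norm_2pq_factorization:
  fixes p q a b c d :: int
  assumes "prime p" "p = a^2 + b^2" "prime q" "q = c^2 + d^2"
    and "gauss_int z" "z * cnj z = of_int (2 * p * q)"
  obtains \<pi> \<pi>' u where "\<pi> = of_int a + \<i> * of_int b \<or> \<pi> = cnj (of_int a + \<i> * of_int b)"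
    "\<pi>' = of_int c + \<i> * of_int d \<or> \<pi>' = cnj (of_int c + \<i> * of_int d)"
    "u = 1 \<or> u = -1 \<or> u = \<i> \<or> u = -\<i>" "z = (1 + \<i>) * \<pi> * \<pi>' * u"
proof -
  obtain z1 where z1: "gauss_int z1" "z = (1 + \<i>) * z1" "z1 * cnj z1 = of_int (p * q)"
    using assms(5,6) gauss_factor_one_plus_ii[of z "p * q"] by (metis mult.assoc)
  obtain \<pi> z2 where z2: "\<pi> = of_int a + \<i> * of_int b \<or> \<pi> = of_int a - \<i> * of_int b"
    "gauss_int z2" "z1 = \<pi> * z2" "z2 * cnj z2 = of_int q"
    using assms(1,2) z1(1,3) by (rule gauss_prime_factor)
  from z2(4) have "z2 * cnj z2 = of_int (q * 1)" by simp
  with assms(3,4) z2(2) obtain \<pi>' u where u: "\<pi>' = of_int c + \<i> * of_int d \<or> \<pi>' = of_int c - \<i> * of_int d"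
    "gauss_int u" "z2 = \<pi>' * u" "u * cnj u = of_int 1"
    by (rule gauss_prime_factor)
  show ?thesis
  proof (rule that)
    show "u = 1 \<or> u = -1 \<or> u = \<i> \<or> u = -\<i>" using u(2,4) by (intro gauss_unit_cases) simp_all
    show "z = (1 + \<i>) * \<pi> * \<pi>' * u" using z1(2) z2(3) u(3) by (simp add: mult.assoc)
  qed (use z2(1) u(1) in \<open>auto simp: complex_eq_iff\<close>)
qed

lemma x_plus_ii_factorization_2pq:
  fixes p q a b c d x y :: int
  assumes "prime p" "p = a^2 + b^2" "prime q" "q = c^2 + d^2"
    and "x^2 + 1 = 2 * p * q * y^2" "odd y"
  defines "P \<equiv> of_int a + \<i> * of_int b" and "Q \<equiv> of_int c + \<i> * of_int d"
  obtains H s Q' u where "gauss_int H" "H * cnj H = of_int \<bar>y\<bar>" "s = 1 \<or> s = -1"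
    "Q' = Q \<or> Q' = cnj Q" "u = 1 \<or> u = -1 \<or> u = \<i> \<or> u = -\<i>"
    "of_int x + s * \<i> = H^2 * (1 + \<i>) * P * Q' * u"
proof -
  obtain G z where G: "gauss_int G" "gauss_int z" "of_int x + \<i> = G^2 * z"
    "G * cnj G = of_int \<bar>y\<bar>" "z * cnj z = of_int (2 * p * q)"
    using assms(5,6) by (rule x_plus_ii_eq_square_mult)
  obtain \<pi> \<pi>' u where dc: "\<pi> = P \<or> \<pi> = cnj P" "\<pi>' = Q \<or> \<pi>' = cnj Q"
    "u = 1 \<or> u = -1 \<or> u = \<i> \<or> u = -\<i>" "z = (1 + \<i>) * \<pi> * \<pi>' * u"
    using assms(1-4) G(2,5) unfolding P_def Q_def by (rule gauss_norm_2pq_factorization)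
  from dc(1) show ?thesis
  proof
    assume "\<pi> = P"
    with G dc show ?thesis by (intro that[of G 1 \<pi>' u]) (simp_all add: mult_ac)
  next
    assume "\<pi> = cnj P"
    \<comment> \<open>conjugate, and move the factor \<open>-\<i>\<close> of \<open>1 - \<i> = (1 + \<i>) (-\<i>)\<close> into the unit\<close>
    have "of_int x + (-1) * \<i> = cnj (of_int x + \<i>)" by (simp add: complex_eq_iff)
    also have "\<dots> = (cnj G)^2 * (1 + \<i>) * P * cnj \<pi>' * (-\<i> * cnj u)"
      unfolding G(3) dc(4) \<open>\<pi> = cnj P\<close> by (simp add: complex_eq_iff algebra_simps)
    finally show ?thesis
      using G(1,4) dc(2,3)
      by (intro that[of "cnj G" "-1" "cnj \<pi>'" "-\<i> * cnj u"]) (auto simp: mult.commute)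
  qed
qed

lemma gauss_unit_absorb:
  assumes "u = 1 \<or> u = -1 \<or> u = \<i> \<or> u = -\<i>"
  obtains \<sigma> w where "\<sigma> = 1 \<or> \<sigma> = -1" "w = H \<or> w = \<i> * H"
    "w^2 * (1 + \<sigma> * \<i>) = -\<i> * u * (1 + \<i>) * H^2"
  using assms
proof (elim disjE)
  assume "u = 1" then show ?thesis by (intro that[of "-1" H]) (simp_all add: algebra_simps)
next
  assume "u = -1" then show ?thesis
    by (intro that[of "-1" "\<i> * H"]) (simp_all add: algebra_simps power_mult_distrib)
next
  assume "u = \<i>" then show ?thesis by (intro that[of 1 H]) (simp_all add: algebra_simps)
next
  assume "u = -\<i>" then show ?thesis
    by (intro that[of 1 "\<i> * H"]) (simp_all add: algebra_simps power_mult_distrib)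
qed

lemma x_plus_ii_normal_form_2pq:
  fixes p q a b c d x y :: int
  assumes "prime p" "p = a^2 + b^2" "prime q" "q = c^2 + d^2"
    and "x^2 + 1 = 2 * p * q * y^2" "odd y"
  defines "P \<equiv> of_int a + \<i> * of_int b" and "Q \<equiv> of_int c + \<i> * of_int d"
  obtains w \<sigma> s Q' where "gauss_int w" "w * cnj w = of_int \<bar>y\<bar>" "\<sigma> = 1 \<or> \<sigma> = -1" "s = 1 \<or> s = -1"
    "Q' = Q \<or> Q' = cnj Q" "w^2 * ((1 + \<sigma> * \<i>) * P * Q') = -\<i> * (of_int x + s * \<i>)"
    "((1 + \<sigma> * \<i>) * P * Q') * cnj ((1 + \<sigma> * \<i>) * P * Q') = of_int (2 * p * q)"
proof -
  obtain H s Q' u where H: "gauss_int H" "H * cnj H = of_int \<bar>y\<bar>" "s = 1 \<or> s = -1"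
    "Q' = Q \<or> Q' = cnj Q" "u = 1 \<or> u = -1 \<or> u = \<i> \<or> u = -\<i>"
    "of_int x + s * \<i> = H^2 * (1 + \<i>) * P * Q' * u"
    using assms(1-6) unfolding P_def Q_def by (rule x_plus_ii_factorization_2pq)
  obtain \<sigma> w where w: "\<sigma> = 1 \<or> \<sigma> = -1" "w = H \<or> w = \<i> * H"
    "w^2 * (1 + \<sigma> * \<i>) = -\<i> * u * (1 + \<i>) * H^2"
    using H(5) by (rule gauss_unit_absorb)
  have norms: "(1 + \<sigma> * \<i>) * cnj (1 + \<sigma> * \<i>) = 2" "P * cnj P = of_int p" "Q' * cnj Q' = of_int q"
    using w(1) H(4) assms(2,4) by (auto simp: P_def Q_def complex_eq_iff power2_eq_square)
  have "((1 + \<sigma> * \<i>) * P * Q') * cnj ((1 + \<sigma> * \<i>) * P * Q')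
      = ((1 + \<sigma> * \<i>) * cnj (1 + \<sigma> * \<i>)) * (P * cnj P) * (Q' * cnj Q')"
    by (simp only: complex_cnj_mult mult_ac)
  also have "\<dots> = of_int (2 * p * q)"
    unfolding norms by simp
  finally have norm_A: "((1 + \<sigma> * \<i>) * P * Q') * cnj ((1 + \<sigma> * \<i>) * P * Q') = of_int (2 * p * q)" .
  have "gauss_int w" using w(2) H(1) by auto
  moreover have "w * cnj w = of_int \<bar>y\<bar>" using w(2) H(2) by (auto simp: complex_eq_iff)
  moreover have "w^2 * ((1 + \<sigma> * \<i>) * P * Q') = -\<i> * (of_int x + s * \<i>)"
    unfolding H(6) by (simp add: mult.assoc[symmetric] w(3))
  ultimately show ?thesis using w(1) H(3,4) norm_A by (intro that)
qed

lemma odd_of_square_plus_one_eq_double: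
  fixes x y m :: int
  assumes "x^2 + 1 = 2 * m * y^2"
  shows "odd y"
proof
  assume "even y"
  then obtain k where "y = 2 * k" ..
  with assms have "(x^2 + 1) mod 4 = 0" by (simp add: power_mult_distrib)
  moreover have "x mod 4 \<in> {0, 1, 2, 3}" by auto
  then have "x^2 mod 4 \<in> {0, 1}"
    by (subst power_mod[symmetric]) (auto simp: power2_eq_square)
  moreover have "(x^2 + 1) mod 4 = (x^2 mod 4 + 1) mod 4" by (simp add: mod_add_left_eq)
  ultimately show False by auto
qed

lemma gauss_combination_square:
  fixes w r1 r2 :: complex
  shows "((w * (1 + \<i>) * r1 + cnj w * (1 - \<i>) * r2) / 2)^2
    = (\<i> / 2) * (w^2 * r1^2 - (cnj w)^2 * r2^2) + (w * cnj w) * (r1 * r2)"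
proof -
  have "(a * (1 + \<i>) + b * (1 - \<i>))^2 = 2 * \<i> * a^2 - 2 * \<i> * b^2 + 4 * (a * b)" for a b :: complex
    by (simp add: power2_eq_square algebra_simps)
  from this[of "w * r1" "cnj w * r2"] show ?thesis
    by (simp add: power_divide power_mult_distrib field_simps)
qed

lemma sqrt_eq_gauss_combination:
  fixes A w s :: complex and X Y D :: int
  assumes wA: "w^2 * A = -\<i> * (of_int X + s * \<i>)" and s: "s = 1 \<or> s = -1"
    and AA: "A * cnj A = of_int D" and "D > 0" and ww: "w * cnj w = of_int \<bar>Y\<bar>"
    and nonneg: "X + Y * sqrt D \<ge> 0"
  obtains v r1 r2 where "v = w \<or> v = -w" "r1^2 = A" "r2^2 = cnj A"
    "complex_of_real (sqrt (X + Y * sqrt D)) = (v * (1 + \<i>) * r1 + cnj v * (1 - \<i>) * r2) / 2"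
proof -
  define r1 where "r1 = csqrt A"
  define r2 where "r2 = complex_of_real (sgn Y * sqrt D) / r1"
  have "w \<noteq> 0" "A \<noteq> 0" using wA s by (auto simp: complex_eq_iff)
  then have "Y \<noteq> 0" "r1 \<noteq> 0" using ww by (auto simp: r1_def)
  have r1r2: "r1 * r2 = of_real (sgn Y * sqrt D)" using \<open>r1 \<noteq> 0\<close> by (simp add: r2_def)
  have "r2^2 = of_real ((sgn Y)^2 * (sqrt D)^2) / A"
    by (simp add: r2_def r1_def power_divide power_mult_distrib)
  also have "\<dots> = cnj A"
    using \<open>Y \<noteq> 0\<close> \<open>D > 0\<close> \<open>A \<noteq> 0\<close> AA by (simp add: sgn_if field_simps)
  finally have r2: "r2^2 = cnj A" .
  define \<alpha> where "\<alpha> = (w * (1 + \<i>) * r1 + cnj w * (1 - \<i>) * r2) / 2"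
  have "\<alpha>^2 = (\<i> / 2) * (w^2 * A - cnj (w^2 * A)) + of_int \<bar>Y\<bar> * of_real (sgn Y * sqrt D)"
    unfolding \<alpha>_def gauss_combination_square ww r1r2 by (simp add: r1_def r2)
  also have "\<dots> = of_real (X + Y * sqrt D)"
    unfolding wA using s by (auto simp: complex_eq_iff mult.assoc[symmetric] abs_mult_sgn
        simp flip: of_int_abs of_int_mult)
  finally have "\<alpha>^2 = (of_real (sqrt (X + Y * sqrt D)))^2"
    using nonneg by (simp flip: of_real_power)
  then have "\<alpha> = of_real (sqrt (X + Y * sqrt D)) \<or> -\<alpha> = of_real (sqrt (X + Y * sqrt D))"
    by (auto simp: power2_eq_iff)
  then show ?thesis
  proof
    assume "\<alpha> = of_real (sqrt (X + Y * sqrt D))"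
    then show ?thesis by (intro that[of w r1 r2]) (simp_all add: r1_def r2 \<alpha>_def)
  next
    assume "-\<alpha> = of_real (sqrt (X + Y * sqrt D))"
    then show ?thesis by (intro that[of "-w" r1 r2]) (simp_all add: r1_def r2 \<alpha>_def minus_divide_left)
  qed
qed

lemma sqrt_unit_2pq:
  fixes p q a b c d x y :: int
  assumes "prime p" "p = a^2 + b^2" "prime q" "q = c^2 + d^2"
    and pell: "x^2 + 1 = 2 * p * q * y^2" and nonneg: "x + y * sqrt (real_of_int (2 * p * q)) \<ge> 0"
  defines "P \<equiv> of_int a + \<i> * of_int b" and "Q \<equiv> of_int c + \<i> * of_int d"
  shows "\<exists>y1 y2. gauss_int y1 \<and> gauss_int y2 \<and>
           (\<exists>\<sigma>. (\<sigma> = 1 \<or> \<sigma> = -1) \<and>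
             (\<exists>r1 r2.
               ((r1^2 = (1 + \<sigma> * \<i>) * P * Q \<and> r2^2 = (1 - \<sigma> * \<i>) * cnj P * cnj Q) \<or>
                (r1^2 = (1 + \<sigma> * \<i>) * P * cnj Q \<and> r2^2 = (1 - \<sigma> * \<i>) * cnj P * Q))
               \<and> complex_of_real (sqrt (x + y * sqrt (real_of_int (2 * p * q))))
                   = (y1 * (1 + \<i>) * r1 + y2 * (1 - \<i>) * r2) / 2))"
proof -
  have "odd y" using pell odd_of_square_plus_one_eq_double[of x "p * q" y] by (simp add: mult.assoc)
  with assms(1-4) pell obtain w \<sigma> s Q' where w: "gauss_int w" "w * cnj w = of_int \<bar>y\<bar>"
    "\<sigma> = 1 \<or> \<sigma> = -1" "s = 1 \<or> s = -1" "Q' = Q \<or> Q' = cnj Q"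
    and A: "w^2 * ((1 + \<sigma> * \<i>) * P * Q') = -\<i> * (of_int x + s * \<i>)"
      "((1 + \<sigma> * \<i>) * P * Q') * cnj ((1 + \<sigma> * \<i>) * P * Q') = of_int (2 * p * q)"
    unfolding P_def Q_def by (rule x_plus_ii_normal_form_2pq)
  have "2 * p * q > 0" using assms(1,3) by (simp add: prime_gt_0_int)
  then obtain v r1 r2 where v: "v = w \<or> v = -w"
    "r1^2 = (1 + \<sigma> * \<i>) * P * Q'" "r2^2 = cnj ((1 + \<sigma> * \<i>) * P * Q')"
    "complex_of_real (sqrt (x + y * sqrt (real_of_int (2 * p * q))))
       = (v * (1 + \<i>) * r1 + cnj v * (1 - \<i>) * r2) / 2"
    using sqrt_eq_gauss_combination[OF A(1) w(4) A(2) _ w(2) nonneg] by blast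
  have "cnj \<sigma> = \<sigma>" using w(3) by auto
  with v(3) have r2: "r2^2 = (1 - \<sigma> * \<i>) * cnj P * cnj Q'" by simp
  from w(5) have "(r1^2 = (1 + \<sigma> * \<i>) * P * Q \<and> r2^2 = (1 - \<sigma> * \<i>) * cnj P * cnj Q) \<or>
      (r1^2 = (1 + \<sigma> * \<i>) * P * cnj Q \<and> r2^2 = (1 - \<sigma> * \<i>) * cnj P * Q)"
    using v(2) r2 by (elim disjE) simp_all
  moreover have "gauss_int v" "gauss_int (cnj v)" using v(1) w(1) by auto
  ultimately show ?thesis
    using w(3) v(4)
    by (intro exI[of _ v] exI[of _ "cnj v"] exI[of _ \<sigma>] exI[of _ r1] exI[of _ r2] conjI) simp_all
qed

theorem lemma41:
  fixes p1 p2 e f g h x y :: int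
  assumes "prime p1" and "prime p2" and "p1 \<noteq> p2"
    and "p1 mod 4 = 1" and "p2 mod 4 = 1"
    and "p1 = e^2 + 4 * f^2" and "p2 = g^2 + 4 * h^2"
    and "fundamental_unit (2 * p1 * p2) (real_of_int x + real_of_int y * sqrt (real_of_int (2 * p1 * p2)))"
    and "x^2 - (2 * p1 * p2) * y^2 = -1"
  shows "\<exists>y1 y2 :: complex. gauss_int y1 \<and> gauss_int y2 \<and>
           (\<exists>\<sigma> :: complex. (\<sigma> = 1 \<or> \<sigma> = -1) \<and>
             (\<exists>r1 r2 :: complex.
               ((r1^2 = (1 + \<sigma> * \<i>) * (of_int e + 2 * \<i> * of_int f) * (of_int g + 2 * \<i> * of_int h) \<and>
                 r2^2 = (1 - \<sigma> * \<i>) * (of_int e - 2 * \<i> * of_int f) * (of_int g - 2 * \<i> * of_int h))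
                \<or>
                (r1^2 = (1 + \<sigma> * \<i>) * (of_int e + 2 * \<i> * of_int f) * (of_int g - 2 * \<i> * of_int h) \<and>
                 r2^2 = (1 - \<sigma> * \<i>) * (of_int e - 2 * \<i> * of_int f) * (of_int g + 2 * \<i> * of_int h)))
               \<and> complex_of_real (sqrt (real_of_int x + real_of_int y * sqrt (real_of_int (2 * p1 * p2))))
                   = (y1 * (1 + \<i>) * r1 + y2 * (1 - \<i>) * r2) / 2))"
proof -
  have nonneg: "x + y * sqrt (real_of_int (2 * p1 * p2)) \<ge> 0"
    using assms(8) by (simp add: fundamental_unit_def)
  have p1: "p1 = e^2 + (2 * f)^2" and p2: "p2 = g^2 + (2 * h)^2"
    and pell: "x^2 + 1 = 2 * p1 * p2 * y^2"
    using assms(6,7,9) by simp_all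
  have "of_int e + \<i> * of_int (2 * f) = of_int e + 2 * \<i> * of_int f"
    "cnj (of_int e + \<i> * of_int (2 * f)) = of_int e - 2 * \<i> * of_int f"
    "of_int g + \<i> * of_int (2 * h) = of_int g + 2 * \<i> * of_int h"
    "cnj (of_int g + \<i> * of_int (2 * h)) = of_int g - 2 * \<i> * of_int h"
    by (simp_all add: complex_eq_iff)
  with sqrt_unit_2pq[OF assms(1) p1 assms(2) p2 pell nonneg] show ?thesis
    by (simp only:)
qed

end
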